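(* Let $\mathbf{B}=\mathbf{B}_+\,\dot\cup\,\mathbf{B}'\in\dot{\mathbb{P}}(\mathbb{L}(\mathbf{C}))$ with $|\mathbf{B}|=|\mathbf{C}|$, and suppose every $L\in\mathbf{B}_+$ has a positive monotonic effect on $D$ relative to $\mathbf{C}$. If for some tree $\mathfrak{T}$ on $\mathbf{B}_+$ and some $\omega^*\in\Omega$ $$D_{\mathbf{B}=\mathbf{1}}(\omega^* )-\sum_{L\in\mathbf{B}_+}D_{\mathbf{B}\setminus\{L\}=\mathbf{1},L=0}(\omega^* )-\sum_{\varnothing\neq\widetilde{\mathbf{B}}\subseteq\mathbf{B}'}D_{\mathbf{B}\setminus\widetilde{\mathbf{B}}=\mathbf{1},\widetilde{\mathbf{B}}=\mathbf{0}}(\omega^* )+\sum_{\mathbf{E}\in\mathfrak{T}}D_{\mathbf{B}\setminus\mathbf{E}=\mathbf{1},\mathbf{E}=\mathbf{0}}(\omega^* )>0,$$ then $\mathbf{B}$ is singular for $\mathcal{D}(\mathbf{C},\Omega)$.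
   Context: Events are binary random variables on a population $\Omega$; $\overline{X}=1-X$; $\mathbb{L}(\mathbf{C})=\mathbf{C}\cup\{\overline{X}:X\in\mathbf{C}\}$; $\dot{\mathbb{P}}(\mathbb{L}(\mathbf{C}))$ is the set of subsets of $\mathbb{L}(\mathbf{C})$ not containing both $X$ and $\overline{X}$; $(L)_{\mathbf{c}}$ is the value of literal $L$ under assignment $\mathbf{c}$; $\bigwedge(\mathbf{B})=\min_{L\in\mathbf{B}}L$. Potential outcomes $D_{\mathbf{c}}(\omega)\in\{0,1\}$. Since $|\mathbf{B}|=|\mathbf{C}|$, values of the literals of $\mathbf{B}$ determine an assignment to $\mathbf{C}$; $D_{\mathbf{B}\setminus\widetilde{\mathbf{B}}=\mathbf{1},\widetilde{\mathbf{B}}=\mathbf{0}}$ sets the literals in $\widetilde{\mathbf{B}}$ to 0 and the rest of $\mathbf{B}$ to 1. A literal $L$ has a positive monotonic effect on $D$ relative to $\mathbf{C}$ if for all $\omega$ and all assignments $\mathbf{c},\mathbf{c}'$ differing only in the variable underlying $L$ with $(L)_{\mathbf{c}}=1,(L)_{\mathbf{c}'}=0$, $D_{\mathbf{c}}(\omega)\ge D_{\mathbf{c}'}(\omega)$. A tree on a finite set $\mathbf{S}$ is a set $\mathfrak{T}$ of 2-element subsets of $\mathbf{S}$ with $|\mathfrak{T}|=|\mathbf{S}|-1$ connecting all elements (empty if $|\mathbf{S}|\le1$). $\mathbf{B}$ is a sufficient cause for $D$ relative to $\mathbf{C}$ for $\omega^*$ if some $\mathbf{c}^*$ has $(\bigwedge(\mathbf{B}))_{\mathbf{c}^*}=1$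 and $D_{\mathbf{c}}(\omega^* )=1$ whenever $(\bigwedge(\mathbf{B}))_{\mathbf{c}}=1$; minimal if no proper subset is such; singular for $\omega^*$ if minimal and no other $\mathbf{B}'\in\dot{\mathbb{P}}(\mathbb{L}(\mathbf{C}))$ is a minimal sufficient cause for $\omega^*$; singular for $\mathcal{D}(\mathbf{C},\Omega)$ if singular for some $\omega^*\in\Omega$. *)

theory Defs
  imports Main
begin

text \<open>Variables (events) range over type 'v; a literal is a pair (X, b):
  (X, True) stands for the event X and (X, False) for its complement.\<close>

type_synonym 'v lit = "'v \<times> bool"

definition lits :: "'v set \<Rightarrow> 'v lit set" where
  "lits C = C \<times> UNIV"

definition consistent_lits :: "'v set \<Rightarrow> 'v lit set set" where
  "consistent_lits C = {B. B \<subseteq> lits C \<and> (\<forall>X. \<not> ((X, True) \<in> B \<and> (X, False) \<in> B))}"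

definition assignments :: "'v set \<Rightarrow> ('v \<Rightarrow> bool) set" where
  "assignments C = {c. \<forall>v. v \<notin> C \<longrightarrow> c v = False}"

definition lit_val :: "'v lit \<Rightarrow> ('v \<Rightarrow> bool) \<Rightarrow> bool" where
  "lit_val L c = (c (fst L) = snd L)"

definition conj_val :: "'v lit set \<Rightarrow> ('v \<Rightarrow> bool) \<Rightarrow> bool" where
  "conj_val B c = (\<forall>L\<in>B. lit_val L c)"

text \<open>Assignment setting literals of Bt to 0 and the other literals of B to 1.\<close>
definition set_lits :: "'v lit set \<Rightarrow> 'v lit set \<Rightarrow> ('v \<Rightarrow> bool)" where
  "set_lits B Bt = (\<lambda>v. \<exists>b. (v, b) \<in> B \<and> (b = ((v, b) \<notin> Bt)))"

definition pos_monotonic ::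
  "'v lit \<Rightarrow> (('v \<Rightarrow> bool) \<Rightarrow> 'w \<Rightarrow> bool) \<Rightarrow> 'v set \<Rightarrow> 'w set \<Rightarrow> bool" where
  "pos_monotonic L D C \<Omega> =
    (\<forall>w\<in>\<Omega>. \<forall>c\<in>assignments C. \<forall>c'\<in>assignments C.
       (\<forall>v. v \<noteq> fst L \<longrightarrow> c v = c' v) \<and> lit_val L c \<and> \<not> lit_val L c'
       \<longrightarrow> (D c' w \<longrightarrow> D c w))"

definition is_tree :: "'a set set \<Rightarrow> 'a set \<Rightarrow> bool" where
  "is_tree T S = (finite S \<and> (\<forall>E\<in>T. E \<subseteq> S \<and> card E = 2) \<and> card T = card S - 1 \<and>
     (\<forall>x\<in>S. \<forall>y\<in>S. (x, y) \<in> {(a, b). {a, b} \<in> T}\<^sup>*))"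

definition sufficient_cause ::
  "'v lit set \<Rightarrow> (('v \<Rightarrow> bool) \<Rightarrow> 'w \<Rightarrow> bool) \<Rightarrow> 'v set \<Rightarrow> 'w \<Rightarrow> bool" where
  "sufficient_cause B D C w =
    ((\<exists>c\<in>assignments C. conj_val B c) \<and>
     (\<forall>c\<in>assignments C. conj_val B c \<longrightarrow> D c w))"

definition minimal_sufficient_cause ::
  "'v lit set \<Rightarrow> (('v \<Rightarrow> bool) \<Rightarrow> 'w \<Rightarrow> bool) \<Rightarrow> 'v set \<Rightarrow> 'w \<Rightarrow> bool" where
  "minimal_sufficient_cause B D C w =
    (sufficient_cause B D C w \<and> (\<forall>B'. B' \<subset> B \<longrightarrow> \<not> sufficient_cause B' D C w))"

definition singular_for ::
  "'v lit set \<Rightarrow> (('v \<Rightarrow> bool) \<Rightarrow> 'w \<Rightarrow> bool) \<Rightarrow> 'v set \<Rightarrow> 'w \<Rightarrow> bool" where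
  "singular_for B D C w =
    (minimal_sufficient_cause B D C w \<and>
     (\<forall>B'\<in>consistent_lits C. B' \<noteq> B \<longrightarrow> \<not> minimal_sufficient_cause B' D C w))"

definition singular ::
  "'v lit set \<Rightarrow> (('v \<Rightarrow> bool) \<Rightarrow> 'w \<Rightarrow> bool) \<Rightarrow> 'v set \<Rightarrow> 'w set \<Rightarrow> bool" where
  "singular B D C \<Omega> = (\<exists>w\<in>\<Omega>. singular_for B D C w)"

end

theory Submission
  imports Defs
begin

text \<open>Write \<open>f M\<close> for the outcome at \<open>\<omega>\<^sup>*\<close> when the literals in \<open>M\<close> are set to 0 and the
  rest of \<open>B\<close> to 1. Monotonicity lets \<open>f\<close> survive deleting literals of \<open>B\<^sub>+\<close> from \<open>M\<close>, so a
  tree edge \<open>{L, L'}\<close> with \<open>f {L, L'}\<close> lies inside \<open>Z = {L \<in> B\<^sub>+. f {L}}\<close>; the tree edges inside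
  a nonempty \<open>Z\<close> form a forest, so there are at most \<open>|Z| - 1\<close> of them and the left-hand side is
  at most \<open>f {} - 1\<close>. Hence \<open>Z = {}\<close>, \<open>f {}\<close> holds and \<open>f\<close> fails on every nonempty \<open>M \<subseteq> B\<close>.
  Since \<open>B\<close> mentions every variable, each assignment is \<open>B\<close> with some literals flipped, so the
  outcome at \<open>\<omega>\<^sup>*\<close> is exactly the conjunction of \<open>B\<close>, and \<open>B\<close> is its only sufficient cause.\<close>

definition edge_rel :: "'a set set \<Rightarrow> ('a \<times> 'a) set" where
  "edge_rel F = {(a, b). {a, b} \<in> F}"

definition graph_component :: "'a set set \<Rightarrow> 'a \<Rightarrow> 'a set" where
  "graph_component F x = {y. (x, y) \<in> (edge_rel F)\<^sup>*}"

lemma edge_rel_insert: "edge_rel (insert {a, b} F) = edge_rel F \<union> {(a, b), (b, a)}"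
  unfolding edge_rel_def by (auto simp: doubleton_eq_iff)

lemma edge_rel_rtrancl_sym: "(x, y) \<in> (edge_rel F)\<^sup>* \<Longrightarrow> (y, x) \<in> (edge_rel F)\<^sup>*"
proof -
  have "(edge_rel F)\<inverse> = edge_rel F" unfolding edge_rel_def by (auto simp: insert_commute)
  moreover assume "(x, y) \<in> (edge_rel F)\<^sup>*"
  ultimately show ?thesis by (metis converse_iff rtrancl_converseI)
qed

lemma graph_component_self: "x \<in> graph_component F x"
  unfolding graph_component_def by simp

lemma graph_component_eq: "y \<in> graph_component F x \<Longrightarrow> graph_component F y = graph_component F x"
  unfolding graph_component_def by (auto intro: rtrancl_trans dest: edge_rel_rtrancl_sym)

lemma graph_component_disjoint:
  "graph_component F a \<noteq> graph_component F b \<Longrightarrow> graph_component F a \<inter> graph_component F b = {}"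
  by (metis disjoint_iff graph_component_eq)

lemma graph_component_subset: "graph_component F x \<subseteq> insert x (\<Union>F)"
proof
  fix y assume "y \<in> graph_component F x"
  then have "(x, y) \<in> (edge_rel F)\<^sup>*" unfolding graph_component_def by simp
  then show "y \<in> insert x (\<Union>F)"
    by (induction rule: rtrancl_induct) (auto simp: edge_rel_def)
qed

lemma finite_graph_component:
  "finite F \<Longrightarrow> \<forall>e\<in>F. finite e \<Longrightarrow> finite (graph_component F x)"
  by (rule finite_subset[OF graph_component_subset]) simp

lemma graph_component_insert:
  "graph_component (insert {a, b} F) x =
    (if a \<in> graph_component F x \<or> b \<in> graph_component F x
     then graph_component F a \<union> graph_component F b else graph_component F x)"
  (is "?L = ?X")
proof
  show "?L \<subseteq> ?X"
  proof
    fix y assume "y \<in> ?L"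
    then have "(x, y) \<in> (edge_rel F \<union> {(a, b), (b, a)})\<^sup>*"
      unfolding graph_component_def edge_rel_insert by simp
    then show "y \<in> ?X"
    proof (induction rule: rtrancl_induct)
      case base
      then show ?case using graph_component_self graph_component_eq by (metis Un_iff)
    next
      case (step y z)
      show ?case
      proof (cases "(y, z) \<in> edge_rel F")
        case True
        then have "z \<in> graph_component F y" unfolding graph_component_def by simp
        then show ?thesis using step.IH graph_component_eq by (smt (verit) Un_iff)
      next
        case False
        then have "(y, z) = (a, b) \<or> (y, z) = (b, a)" using step by auto
        then show ?thesis using step.IH graph_component_self graph_component_eq
          by (smt (verit) Pair_inject Un_iff)
      qed
    qed
  qed
next
  have mono: "graph_component F u \<subseteq> ?L" if "u \<in> ?L" for u
  proof -
    have "graph_component F u \<subseteq> graph_component (insert {a, b} F) u"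
      unfolding graph_component_def edge_rel_insert by (auto intro: rtrancl_mono[THEN subsetD, rotated])
    then show ?thesis using graph_component_eq[OF that] by simp
  qed
  have ab: "b \<in> graph_component (insert {a, b} F) a" "a \<in> graph_component (insert {a, b} F) b"
    unfolding graph_component_def edge_rel_insert by auto
  show "?X \<subseteq> ?L"
  proof (cases "a \<in> graph_component F x \<or> b \<in> graph_component F x")
    case True
    have "x \<in> ?L" by (rule graph_component_self)
    then have "a \<in> ?L \<or> b \<in> ?L" using True mono by blast
    then have "a \<in> ?L" and "b \<in> ?L" using ab graph_component_eq by metis+
    then show ?thesis using True mono by simp
  next
    case False
    then show ?thesis using mono[OF graph_component_self] by simp
  qed
qed

lemma card_graph_component_le:
  assumes "finite F" "\<forall>e\<in>F. \<exists>a b. e = {a, b}"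
  shows "card (graph_component F x) \<le> card {e\<in>F. e \<subseteq> graph_component F x} + 1"
  using assms
proof (induction F arbitrary: x rule: finite_induct)
  case empty
  have "graph_component {} x = {x}" unfolding graph_component_def edge_rel_def by auto
  then show ?case by simp
next
  case (insert e F)
  obtain a b where e: "e = {a, b}" using insert.prems by auto
  let ?K = "graph_component F"
  have "\<forall>e'\<in>F. finite e'" using insert.prems by auto
  then have fin: "finite (?K u)" for u using finite_graph_component[OF insert.hyps(1)] by blast
  have IH: "card (?K u) \<le> card {e\<in>F. e \<subseteq> ?K u} + 1" for u using insert by auto
  have finE: "finite {e'\<in>F'. e' \<subseteq> X}" if "F' \<subseteq> insert e F" for F' X
    by (rule finite_subset[of _ "insert e F"]) (use that insert.hyps(1) in auto)
  show ?case
  proof (cases "a \<in> ?K x \<or> b \<in> ?K x")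
    case False
    then have "graph_component (insert e F) x = ?K x" "{e'\<in>insert e F. e' \<subseteq> ?K x} = {e'\<in>F. e' \<subseteq> ?K x}"
      unfolding e using graph_component_insert[of a b F x] by auto
    then show ?thesis using IH by simp
  next
    case True
    then have R: "graph_component (insert e F) x = ?K a \<union> ?K b"
      unfolding e using graph_component_insert[of a b F x] by simp
    show ?thesis
    proof (cases "?K a = ?K b")
      case True
      have "card {e\<in>F. e \<subseteq> ?K a} \<le> card {e'\<in>insert e F. e' \<subseteq> ?K a}"
        by (rule card_mono[OF finE]) auto
      then show ?thesis using IH[of a] R True by simp
    next
      case False
      let ?Ea = "{e\<in>F. e \<subseteq> ?K a}" and ?Eb = "{e\<in>F. e \<subseteq> ?K b}"
      have dis: "?K a \<inter> ?K b = {}" using graph_component_disjoint[OF False] .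
      then have "?Ea \<inter> ?Eb = {}" using insert.prems by fastforce
      then have "card (insert e (?Ea \<union> ?Eb)) = card ?Ea + card ?Eb + 1"
        using insert.hyps(2) finE[of F, OF subset_insertI] by (simp add: card_Un_disjoint)
      moreover have "card (insert e (?Ea \<union> ?Eb)) \<le> card {e'\<in>insert e F. e' \<subseteq> ?K a \<union> ?K b}"
        using graph_component_self[of a F] graph_component_self[of b F]
        by (intro card_mono[OF finE]) (auto simp: e)
      moreover have "card (?K a \<union> ?K b) = card (?K a) + card (?K b)"
        using card_Un_disjoint[OF fin fin dis] .
      ultimately show ?thesis unfolding R using IH[of a] IH[of b] by linarith
    qed
  qed
qed

lemma edge_rel_rtrancl_contract:
  assumes "(u, v) \<in> (edge_rel T)\<^sup>*" and "\<forall>x\<in>Z. \<forall>y\<in>Z. g x = g y"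
  shows "(g u, g v) \<in> (edge_rel ((\<lambda>E. g ` E) ` {E\<in>T. \<not> E \<subseteq> Z}))\<^sup>*"
  using assms(1)
proof (induction rule: rtrancl_induct)
  case (step y z)
  show ?case
  proof (cases "{y, z} \<subseteq> Z")
    case True
    then have "g z = g y" using assms(2) by blast
    then show ?thesis using step.IH by simp
  next
    case False
    then have "g ` {y, z} \<in> (\<lambda>E. g ` E) ` {E\<in>T. \<not> E \<subseteq> Z}"
      using step.hyps(2) unfolding edge_rel_def by blast
    then have "(g y, g z) \<in> edge_rel ((\<lambda>E. g ` E) ` {E\<in>T. \<not> E \<subseteq> Z})"
      unfolding edge_rel_def by simp
    then show ?thesis using step.IH by (rule rtrancl_into_rtrancl[rotated])
  qed
qed simp

lemma finite_tree_edges: "is_tree T S \<Longrightarrow> finite T"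
  unfolding is_tree_def by (auto intro: finite_subset[of T "Pow S"])

text \<open>Contracting \<open>Z\<close> to a point \<open>z\<^sub>0\<close> keeps the tree connected on \<open>|S| - |Z| + 1\<close> vertices
  while deleting the edges inside \<open>Z\<close>.\<close>

lemma card_tree_edges_within_le:
  assumes "is_tree T S" "Z \<subseteq> S" "Z \<noteq> {}"
  shows "card {E\<in>T. E \<subseteq> Z} \<le> card Z - 1"
proof -
  from assms(1) have finS: "finite S" and edges: "\<forall>E\<in>T. E \<subseteq> S \<and> card E = 2"
    and cT: "card T = card S - 1" and conn: "\<forall>x\<in>S. \<forall>y\<in>S. (x, y) \<in> (edge_rel T)\<^sup>*"
    unfolding is_tree_def edge_rel_def by auto
  have finT: "finite T" using finite_tree_edges[OF assms(1)] .
  obtain z0 where z0: "z0 \<in> Z" using assms(3) by blast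
  define g where "g x = (if x \<in> Z then z0 else x)" for x
  define To where "To = {E\<in>T. \<not> E \<subseteq> Z}"
  define F where "F = (\<lambda>E. g ` E) ` To"
  have F_edges: "\<forall>e\<in>F. \<exists>a b. e = {a, b}"
  proof
    fix e assume "e \<in> F"
    then obtain E where E: "E \<in> T" "e = g ` E" unfolding F_def To_def by blast
    then obtain p q where "E = {p, q}" using edges card_2_iff by metis
    then show "\<exists>a b. e = {a, b}" using E(2) by auto
  qed
  have finF: "finite F" unfolding F_def To_def using finT by simp
  have "g ` S \<subseteq> graph_component F z0"
  proof
    fix y assume "y \<in> g ` S"
    then obtain x where x: "x \<in> S" "y = g x" by blast
    have "(z0, x) \<in> (edge_rel T)\<^sup>*" using conn z0 x(1) assms(2) by blast
    moreover have "\<forall>x\<in>Z. \<forall>y\<in>Z. g x = g y" unfolding g_def by simp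
    ultimately have "(g z0, g x) \<in> (edge_rel F)\<^sup>*"
      unfolding F_def To_def by (rule edge_rel_rtrancl_contract)
    then show "y \<in> graph_component F z0" unfolding graph_component_def using x z0 by (simp add: g_def)
  qed
  moreover have "\<forall>e\<in>F. finite e" using F_edges by auto
  then have "finite (graph_component F z0)" by (rule finite_graph_component[OF finF])
  ultimately have "card (g ` S) \<le> card (graph_component F z0)" by (rule card_mono[rotated])
  also have "\<dots> \<le> card {e\<in>F. e \<subseteq> graph_component F z0} + 1"
    using card_graph_component_le[OF finF F_edges] .
  also have "card {e\<in>F. e \<subseteq> graph_component F z0} \<le> card F" by (rule card_mono[OF finF]) blast
  also have "card F \<le> card To" unfolding F_def by (rule card_image_le) (simp add: To_def finT)
  finally have "card (g ` S) \<le> card To + 1" by simp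
  moreover have "g ` S = insert z0 (S - Z)" unfolding g_def using z0 assms(2) by auto
  then have "card (g ` S) = card S - card Z + 1"
    using finS z0 assms(2) by (simp add: card_Diff_subset finite_subset)
  moreover have "card To + card {E\<in>T. E \<subseteq> Z} = card T"
  proof -
    have "To \<union> {E\<in>T. E \<subseteq> Z} = T" "To \<inter> {E\<in>T. E \<subseteq> Z} = {}" unfolding To_def by auto
    then show ?thesis using finT card_Un_disjoint[of To "{E\<in>T. E \<subseteq> Z}"] unfolding To_def by simp
  qed
  moreover have "finite Z" using finS assms(2) by (rule finite_subset[rotated])
  then have "card Z \<le> card S" "card Z \<ge> 1"
    using card_mono[OF finS assms(2)] assms(3) by (auto simp: Suc_le_eq card_gt_0_iff)
  ultimately show ?thesis using cT by linarith
qed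

lemma tree_sum_le_singleton_sum:
  fixes f :: "'a set \<Rightarrow> bool"
  assumes "is_tree T P" and mono: "\<And>S R. R \<subseteq> P \<Longrightarrow> f S \<Longrightarrow> f (S - R)"
  shows "(\<Sum>E\<in>T. of_bool (f E) :: int) \<le> (\<Sum>L\<in>P. of_bool (f {L})) - of_bool (\<exists>L\<in>P. f {L})"
proof -
  from assms(1) have finP: "finite P" and edges: "\<forall>E\<in>T. E \<subseteq> P \<and> card E = 2"
    unfolding is_tree_def by auto
  have finT: "finite T" using finite_tree_edges[OF assms(1)] .
  define Z where "Z = {L\<in>P. f {L}}"
  have "T \<inter> {E. f E} \<subseteq> {E\<in>T. E \<subseteq> Z}"
  proof
    fix E assume E: "E \<in> T \<inter> {E. f E}"
    then obtain p q where pq: "E = {p, q}" "p \<noteq> q" "p \<in> P" "q \<in> P"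
      using edges by (auto simp: card_2_iff)
    have "{p, q} - {q} = {p}" "{p, q} - {p} = {q}" using pq(2) by auto
    then have "f {p}" "f {q}" using mono[of "{q}" E] mono[of "{p}" E] E pq by auto
    then show "E \<in> {E\<in>T. E \<subseteq> Z}" using E pq unfolding Z_def by auto
  qed
  then have tree_sum: "(\<Sum>E\<in>T. of_bool (f E)) \<le> int (card {E\<in>T. E \<subseteq> Z})"
    using finT by (simp add: card_mono)
  have singleton_sum: "(\<Sum>L\<in>P. of_bool (f {L})) = int (card Z)"
    using finP unfolding Z_def by (simp add: Int_def conj_commute)
  show ?thesis
  proof (cases "Z = {}")
    case True
    then have "{E\<in>T. E \<subseteq> Z} = {}" using edges by fastforce
    then have "(\<Sum>E\<in>T. of_bool (f E)) \<le> (0::int)" using tree_sum by (simp only: card.empty of_nat_0)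
    then show ?thesis using singleton_sum True unfolding Z_def by simp
  next
    case False
    then have "card {E\<in>T. E \<subseteq> Z} \<le> card Z - 1" "card Z \<ge> 1"
      using card_tree_edges_within_le[OF assms(1)] finP unfolding Z_def
      by (auto simp: Suc_le_eq card_gt_0_iff)
    then show ?thesis using tree_sum singleton_sum False unfolding Z_def by auto
  qed
qed

lemma tree_inequality_isolates_empty_set:
  fixes f :: "'a set \<Rightarrow> bool"
  assumes "finite N" "is_tree T P"
    and mono: "\<And>S R. R \<subseteq> P \<Longrightarrow> f S \<Longrightarrow> f (S - R)"
    and ineq: "(of_bool (f {}) :: int) - (\<Sum>L\<in>P. of_bool (f {L}))
      - (\<Sum>M\<in>{M. M \<noteq> {} \<and> M \<subseteq> N}. of_bool (f M)) + (\<Sum>E\<in>T. of_bool (f E)) > 0"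
  shows "f {}" and "\<And>M. M \<noteq> {} \<Longrightarrow> M \<subseteq> P \<union> N \<Longrightarrow> \<not> f M"
proof -
  have "(\<Sum>M\<in>{M. M \<noteq> {} \<and> M \<subseteq> N}. of_bool (f M) :: int) \<ge> 0"
    by (intro sum_nonneg) simp
  then have "f {}" and no_singleton: "\<not> (\<exists>L\<in>P. f {L})"
    and N_sum_zero: "(\<Sum>M\<in>{M. M \<noteq> {} \<and> M \<subseteq> N}. of_bool (f M) :: int) = 0"
    using ineq tree_sum_le_singleton_sum[where f = f, OF assms(2) mono]
    by (cases "f {}"; cases "\<exists>L\<in>P. f {L}"; simp)+
  then show "f {}" by simp
  have not_N: "\<not> f M" if "M \<noteq> {}" "M \<subseteq> N" for M
    using N_sum_zero that \<open>finite N\<close> by auto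
  fix M assume M: "M \<noteq> {}" "M \<subseteq> P \<union> N"
  show "\<not> f M"
  proof
    assume "f M"
    show False
    proof (cases "M - P = {}")
      case False
      then show False using not_N[of "M - P"] mono[of P M] \<open>f M\<close> M by blast
    next
      case True
      then obtain L where "L \<in> M" "L \<in> P" using M by blast
      then have "f (M - (M - {L}))" and "M - (M - {L}) = {L}"
        using mono[of "M - {L}" M] \<open>f M\<close> True by blast+
      then show False using no_singleton \<open>L \<in> P\<close> by simp
    qed
  qed
qed

lemma consistent_lits_sign_unique:
  "B \<in> consistent_lits C \<Longrightarrow> (v, b) \<in> B \<Longrightarrow> (v, b') \<in> B \<Longrightarrow> b' = b"
  unfolding consistent_lits_def by (cases b; cases b'; auto)

lemma set_lits_apply:
  assumes "B \<in> consistent_lits C" "(v, b) \<in> B"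
  shows "set_lits B M v = (if (v, b) \<in> M then \<not> b else b)"
proof -
  have "set_lits B M v \<longleftrightarrow> b = ((v, b) \<notin> M)"
  proof
    assume "set_lits B M v"
    then obtain b' where "(v, b') \<in> B" "b' = ((v, b') \<notin> M)" unfolding set_lits_def by blast
    then show "b = ((v, b) \<notin> M)" using consistent_lits_sign_unique[OF assms] by blast
  next
    assume "b = ((v, b) \<notin> M)"
    then show "set_lits B M v" using assms(2) unfolding set_lits_def by blast
  qed
  then show ?thesis by auto
qed

lemma set_lits_in_assignments: "B \<in> consistent_lits C \<Longrightarrow> set_lits B M \<in> assignments C"
  unfolding assignments_def set_lits_def consistent_lits_def lits_def by auto

lemma lit_val_set_lits:
  assumes "B \<in> consistent_lits C" "L \<in> B"
  shows "lit_val L (set_lits B M) = (L \<notin> M)"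
proof -
  obtain v b where L: "L = (v, b)" by fastforce
  then show ?thesis using set_lits_apply[OF assms(1), of v b M] assms(2)
    unfolding lit_val_def by (cases b) auto
qed

lemma fst_consistent_lits_eq:
  assumes "finite C" "B \<in> consistent_lits C" "card B = card C"
  shows "fst ` B = C"
proof -
  have "fst ` B \<subseteq> C" using assms(2) unfolding consistent_lits_def lits_def by auto
  moreover have "inj_on fst B"
  proof (rule inj_onI)
    fix x y assume "x \<in> B" "y \<in> B" "fst x = fst y"
    then show "x = y"
      using consistent_lits_sign_unique[OF assms(2)] by (cases x, cases y) auto
  qed
  then have "card (fst ` B) = card C" using assms(3) by (simp add: card_image)
  ultimately show ?thesis using card_subset_eq[OF assms(1)] by blast
qed

lemma assignment_eq_set_lits:
  assumes "B \<in> consistent_lits C" "fst ` B = C" "c \<in> assignments C"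
  shows "c = set_lits B {L\<in>B. \<not> lit_val L c}"
proof
  fix v
  show "c v = set_lits B {L\<in>B. \<not> lit_val L c} v"
  proof (cases "v \<in> C")
    case True
    then obtain b where "(v, b) \<in> B" using assms(2) by force
    then show ?thesis using set_lits_apply[OF assms(1)] unfolding lit_val_def by auto
  next
    case False
    then show ?thesis using assms(3) set_lits_in_assignments[OF assms(1)]
      unfolding assignments_def by blast
  qed
qed

lemma pos_monotonic_set_lits_remove:
  assumes "B \<in> consistent_lits C" "pos_monotonic L D C \<Omega>" "w \<in> \<Omega>" "L \<in> B"
    and "D (set_lits B M) w"
  shows "D (set_lits B (M - {L})) w"
proof (cases "L \<in> M")
  case True
  have "\<forall>v. v \<noteq> fst L \<longrightarrow> set_lits B (M - {L}) v = set_lits B M v"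
    unfolding set_lits_def by auto
  moreover have "lit_val L (set_lits B (M - {L}))" "\<not> lit_val L (set_lits B M)"
    using lit_val_set_lits[OF assms(1,4)] True by auto
  ultimately show ?thesis
    using assms set_lits_in_assignments[OF assms(1)] unfolding pos_monotonic_def by blast
qed (use assms(5) in simp)

lemma pos_monotonic_set_lits_Diff:
  assumes "B \<in> consistent_lits C" "w \<in> \<Omega>"
    and "finite R" "R \<subseteq> B" "\<forall>L\<in>R. pos_monotonic L D C \<Omega>" "D (set_lits B M) w"
  shows "D (set_lits B (M - R)) w"
  using assms(3-5)
proof (induction R rule: finite_induct)
  case (insert L R)
  then have "D (set_lits B (M - R)) w" "pos_monotonic L D C \<Omega>" "L \<in> B" by simp_all
  then have "D (set_lits B (M - R - {L})) w"
    using pos_monotonic_set_lits_remove[OF assms(1) _ assms(2)] by blast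
  moreover have "M - R - {L} = M - insert L R" by blast
  ultimately show ?case by simp
qed (use assms(6) in simp)

lemma outcome_iff_conj_val:
  assumes "B \<in> consistent_lits C" "fst ` B = C" "D (set_lits B {}) w"
    and "\<And>M. M \<noteq> {} \<Longrightarrow> M \<subseteq> B \<Longrightarrow> \<not> D (set_lits B M) w"
    and "c \<in> assignments C"
  shows "D c w = conj_val B c"
proof -
  define M where "M = {L\<in>B. \<not> lit_val L c}"
  have c: "c = set_lits B M" unfolding M_def by (rule assignment_eq_set_lits[OF assms(1,2,5)])
  have "conj_val B c \<longleftrightarrow> M = {}" unfolding conj_val_def M_def by auto
  moreover have "M \<subseteq> B" unfolding M_def by blast
  ultimately show ?thesis using assms(3) assms(4)[of M] c by auto
qed

lemma sufficient_cause_eq: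
  assumes "B \<in> consistent_lits C" "fst ` B = C"
    and outcome: "\<And>c. c \<in> assignments C \<Longrightarrow> D c w = conj_val B c"
    and "B'' \<subseteq> lits C" "sufficient_cause B'' D C w"
  shows "B'' = B"
proof
  obtain c0 where c0: "c0 \<in> assignments C" "conj_val B'' c0"
    using assms(5) unfolding sufficient_cause_def by blast
  have implies_B: "conj_val B c" if "c \<in> assignments C" "conj_val B'' c" for c
    using assms(5) outcome[OF that(1)] that unfolding sufficient_cause_def by blast
  show "B'' \<subseteq> B"
  proof
    fix L assume L: "L \<in> B''"
    then have "fst L \<in> C" using assms(4) unfolding lits_def by (auto simp: mem_Times_iff)
    then have "fst L \<in> fst ` B" using assms(2) by simp
    then obtain x where x: "x \<in> B" "fst x = fst L" by auto
    have "lit_val L c0" using c0(2) L unfolding conj_val_def by blast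
    moreover have "lit_val x c0" using implies_B[OF c0] x(1) unfolding conj_val_def by blast
    ultimately have "snd x = snd L" using x(2) unfolding lit_val_def by simp
    then have "x = L" using x(2) by (simp add: prod_eq_iff)
    then show "L \<in> B" using x(1) by simp
  qed
  show "B \<subseteq> B''"
  proof
    fix L assume L: "L \<in> B"
    show "L \<in> B''"
    proof (rule ccontr)
      assume "L \<notin> B''"
      have "lit_val L' (set_lits B {L})" if "L' \<in> B''" for L'
        using lit_val_set_lits[OF assms(1), of L' "{L}"] that \<open>B'' \<subseteq> B\<close> \<open>L \<notin> B''\<close> by auto
      then have "conj_val B (set_lits B {L})"
        using implies_B set_lits_in_assignments[OF assms(1)] unfolding conj_val_def by blast
      then show False using lit_val_set_lits[OF assms(1) L] L unfolding conj_val_def by auto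
    qed
  qed
qed

lemma singular_for_if_outcome_iff_conj_val:
  assumes "B \<in> consistent_lits C" "fst ` B = C"
    and "\<And>c. c \<in> assignments C \<Longrightarrow> D c w = conj_val B c"
  shows "singular_for B D C w"
proof -
  have "conj_val B (set_lits B {})"
    unfolding conj_val_def using lit_val_set_lits[OF assms(1)] by simp
  then have "sufficient_cause B D C w"
    unfolding sufficient_cause_def using set_lits_in_assignments[OF assms(1)] assms(3) by blast
  moreover have unique: "B'' = B" if "B'' \<subseteq> lits C" "sufficient_cause B'' D C w" for B''
    using sufficient_cause_eq[OF assms that] .
  moreover have "B \<subseteq> lits C" using assms(1) unfolding consistent_lits_def by blast
  ultimately have "minimal_sufficient_cause B D C w"
    unfolding minimal_sufficient_cause_def by blast
  moreover have "B'' = B" if "B'' \<in> consistent_lits C" "minimal_sufficient_cause B'' D C w" for B''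
    using unique that unfolding consistent_lits_def minimal_sufficient_cause_def by blast
  ultimately show ?thesis unfolding singular_for_def by blast
qed

theorem mainTheorem15:
  fixes C :: "'v set" and \<Omega> :: "'w set" and D :: "('v \<Rightarrow> bool) \<Rightarrow> 'w \<Rightarrow> bool"
    and B Bp B' :: "'v lit set" and T :: "'v lit set set" and w :: 'w
  assumes "finite C"
    and "B \<in> consistent_lits C" and "card B = card C"
    and "B = Bp \<union> B'" and "Bp \<inter> B' = {}"
    and "\<forall>L\<in>Bp. pos_monotonic L D C \<Omega>"
    and "is_tree T Bp" and "w \<in> \<Omega>"
    and "(of_bool (D (set_lits B {}) w) :: int)
         - (\<Sum>L\<in>Bp. of_bool (D (set_lits B {L}) w))
         - (\<Sum>Bt\<in>{Bt. Bt \<noteq> {} \<and> Bt \<subseteq> B'}. of_bool (D (set_lits B Bt) w))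
         + (\<Sum>E\<in>T. of_bool (D (set_lits B E) w)) > 0"
  shows "singular B D C \<Omega>"
proof -
  have "B \<subseteq> C \<times> UNIV" using assms(2) unfolding consistent_lits_def lits_def by blast
  then have "finite B" by (rule finite_subset) (simp add: assms(1))
  then have "finite B'" using assms(4) by simp
  have mono: "D (set_lits B (M - R)) w" if "R \<subseteq> Bp" "D (set_lits B M) w" for M R
  proof -
    have "R \<subseteq> B" using that(1) assms(4) by blast
    then have "finite R" using \<open>finite B\<close> by (rule finite_subset)
    have "\<forall>L\<in>R. pos_monotonic L D C \<Omega>" using that(1) assms(6) by blast
    with \<open>finite R\<close> \<open>R \<subseteq> B\<close> show ?thesis
      by (rule pos_monotonic_set_lits_Diff[OF assms(2,8)]) (rule that(2))
  qed
  have D0: "D (set_lits B {}) w"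
    using \<open>finite B'\<close> assms(7) mono assms(9)
    by (rule tree_inequality_isolates_empty_set(1)[where f = "\<lambda>M. D (set_lits B M) w"])
  have none: "\<not> D (set_lits B M) w" if "M \<noteq> {}" "M \<subseteq> B" for M
    using \<open>finite B'\<close> assms(7) mono assms(9) that(1) that(2)[unfolded assms(4)]
    by (rule tree_inequality_isolates_empty_set(2)[where f = "\<lambda>M. D (set_lits B M) w"])
  have "fst ` B = C" using assms(1-3) by (rule fst_consistent_lits_eq)
  have "singular_for B D C w"
    by (rule singular_for_if_outcome_iff_conj_val[OF assms(2) \<open>fst ` B = C\<close>])
      (rule outcome_iff_conj_val[where D = D, OF assms(2) \<open>fst ` B = C\<close> D0 none])
  then show ?thesis unfolding singular_def using assms(8) by blast
qed

end
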